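(* Let $G$ be a connected non-regular graph with $n$ vertices, $m$ edges, maximum degree $\Delta$ and minimum degree $\delta$, and put $D=(\Delta-\delta)^2$. Then (i) if $n\le\frac{4m(\sqrt{1+D}-1)}{D}$, $$QE(G)\ <\ \frac{2m}{n}+\sqrt{(n-1)\Big[2m+\frac n4D-\Big(\frac{2m}{n}\Big)^2\Big]};$$ (ii) if $n>\frac{4m(\sqrt{1+D}-1)}{D}$, $$QE(G)\ <\ \sqrt{\frac{2m}{n}+\frac14D}+\sqrt{(n-1)\Big(2m+\frac{n-1}{4}D-\frac{2m}{n}\Big)}.$$
   Context: All graphs are finite, simple and undirected. For a graph $G$ with $n$ vertices and $m$ edges, let $q_1\ge\cdots\ge q_n\ge0$ be the eigenvalues of the signless Laplacian $Q(G)=D(G)+A(G)$ (degree diagonal matrix plus adjacency matrix). The signless Laplacian energy is $QE(G)=\sum_{i=1}^n|q_i-\frac{2m}{n}|$. *)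

theory Defs
  imports "Jordan_Normal_Form.Jordan_Normal_Form"
begin

text \<open>Simple graphs on the vertex set {0..<n}, given by an adjacency relation E
  (assumed symmetric and irreflexive in the theorem).\<close>

definition degree :: "nat \<Rightarrow> (nat \<Rightarrow> nat \<Rightarrow> bool) \<Rightarrow> nat \<Rightarrow> nat" where
  "degree n E i = card {j. j < n \<and> E i j}"

definition num_edges :: "nat \<Rightarrow> (nat \<Rightarrow> nat \<Rightarrow> bool) \<Rightarrow> nat" where
  "num_edges n E = card {(i, j). i < j \<and> j < n \<and> E i j}"

definition max_degree :: "nat \<Rightarrow> (nat \<Rightarrow> nat \<Rightarrow> bool) \<Rightarrow> nat" where
  "max_degree n E = Max (degree n E ` {0..<n})"

definition min_degree :: "nat \<Rightarrow> (nat \<Rightarrow> nat \<Rightarrow> bool) \<Rightarrow> nat" where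
  "min_degree n E = Min (degree n E ` {0..<n})"

definition graph_connected :: "nat \<Rightarrow> (nat \<Rightarrow> nat \<Rightarrow> bool) \<Rightarrow> bool" where
  "graph_connected n E \<longleftrightarrow>
     (\<forall>i<n. \<forall>j<n. (\<lambda>x y. x < n \<and> y < n \<and> E x y)\<^sup>*\<^sup>* i j)"

definition regular_graph :: "nat \<Rightarrow> (nat \<Rightarrow> nat \<Rightarrow> bool) \<Rightarrow> bool" where
  "regular_graph n E \<longleftrightarrow> (\<forall>i<n. \<forall>j<n. degree n E i = degree n E j)"

definition signless_laplacian :: "nat \<Rightarrow> (nat \<Rightarrow> nat \<Rightarrow> bool) \<Rightarrow> real mat" where
  "signless_laplacian n E = mat n n (\<lambda>(i, j).
     if i = j then real (degree n E i) else if E i j then 1 else 0)"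

text \<open>es is the list of eigenvalues (with multiplicities) of the matrix A.\<close>
definition is_eigenvalue_list :: "real mat \<Rightarrow> real list \<Rightarrow> bool" where
  "is_eigenvalue_list A es \<longleftrightarrow> char_poly A = (\<Prod>q\<leftarrow>es. [:- q, 1:])"

definition QE :: "nat \<Rightarrow> (nat \<Rightarrow> nat \<Rightarrow> bool) \<Rightarrow> real list \<Rightarrow> real" where
  "QE n E es = (\<Sum>q\<leftarrow>es. \<bar>q - 2 * real (num_edges n E) / real n\<bar>)"

end

theory Submission
  imports Defs "Jordan_Normal_Form.Schur_Decomposition" "HOL-Analysis.Function_Topology"
    "HOL-Analysis.Convex"
begin

text \<open>Write \<open>u = 2m/n\<close> and \<open>x\<^sub>i = q\<^sub>i - u\<close>, so that \<open>QE = \<Sum>|x\<^sub>i|\<close>. From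
  \<open>tr Q = 2m\<close> and \<open>tr Q\<^sup>2 = \<Sum>d\<^sub>i\<^sup>2 + 2m\<close> the \<open>x\<^sub>i\<close> sum to zero and
  \<open>\<Sum>x\<^sub>i\<^sup>2 = \<Sum>(d\<^sub>i - u)\<^sup>2 + 2m \<le> 2m + nD/4 =: T\<close> (Popoviciu's inequality for the degrees).
  The Rayleigh quotient of the all-ones vector is \<open>2u\<close>, and it is not the maximum because
  \<open>G\<close> is not regular; hence the largest eigenvalue gives some \<open>x\<^sub>1 > u\<close>.
  For (i), Cauchy-Schwarz on the remaining \<open>n - 1\<close> terms gives
  \<open>QE \<le> x\<^sub>1 + sqrt ((n - 1) (T - x\<^sub>1\<^sup>2))\<close>, which decreases in \<open>x\<^sub>1\<close> beyond
  \<open>sqrt (T/n)\<close>, and the hypothesis on \<open>n\<close> says exactly that \<open>u \<ge> sqrt (T/n)\<close>.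
  For (ii), Cauchy-Schwarz gives \<open>QE \<le> sqrt (n T)\<close>, strictly: \<open>Q\<close> is positive semidefinite,
  so a negative \<open>x\<^sub>j\<close> has \<open>|x\<^sub>j| \<le> u < x\<^sub>1\<close> and the \<open>|x\<^sub>i|\<close> are not all equal.\<close>

section \<open>Elementary inequalities\<close>

lemma sum_of_squares_card_minus_square:
  fixes f :: "'a \<Rightarrow> real"
  assumes "finite I"
  shows "2 * ((\<Sum>i\<in>I. (f i)\<^sup>2) * card I - (\<Sum>i\<in>I. f i)\<^sup>2)
           = (\<Sum>i\<in>I. \<Sum>j\<in>I. (f i - f j)\<^sup>2)"
proof -
  have "(\<Sum>i\<in>I. \<Sum>j\<in>I. (f i - f j)\<^sup>2)
      = (\<Sum>i\<in>I. \<Sum>j\<in>I. (f i)\<^sup>2) + (\<Sum>i\<in>I. \<Sum>j\<in>I. (f j)\<^sup>2) - 2 * (\<Sum>i\<in>I. \<Sum>j\<in>I. f i * f j)"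
    by (simp add: power2_diff sum.distrib sum_subtractf sum_distrib_left mult.assoc)
  also have "(\<Sum>i\<in>I. \<Sum>j\<in>I. f i * f j) = (\<Sum>i\<in>I. f i)\<^sup>2"
    by (simp add: power2_eq_square sum_product)
  also have "(\<Sum>i\<in>I. \<Sum>j\<in>I. (f i)\<^sup>2) = (\<Sum>i\<in>I. (f i)\<^sup>2) * card I"
    by (subst sum_distrib_right) (simp add: mult.commute)
  also have "(\<Sum>i\<in>I. \<Sum>j\<in>I. (f j)\<^sup>2) = (\<Sum>i\<in>I. (f i)\<^sup>2) * card I"
    by simp
  finally show ?thesis by simp
qed

lemma sum_squared_less_sum_of_squares:
  fixes f :: "'a \<Rightarrow> real"
  assumes "finite I" and "i \<in> I" and "j \<in> I" and "f i \<noteq> f j"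
  shows "(\<Sum>i\<in>I. f i)\<^sup>2 < (\<Sum>i\<in>I. (f i)\<^sup>2) * card I"
proof -
  have "0 < (f i - f j)\<^sup>2" using assms(4) by simp
  also have "\<dots> \<le> (\<Sum>j'\<in>I. (f i - f j')\<^sup>2)"
    by (rule member_le_sum) (use assms in auto)
  also have "\<dots> \<le> (\<Sum>i'\<in>I. \<Sum>j'\<in>I. (f i' - f j')\<^sup>2)"
    by (rule member_le_sum[of i _ "\<lambda>i'. \<Sum>j'\<in>I. (f i' - f j')\<^sup>2"])
       (use assms in \<open>auto intro: sum_nonneg\<close>)
  finally show ?thesis
    unfolding sum_of_squares_card_minus_square[OF assms(1), symmetric] by simp
qed

lemma sum_square_deviation_le_range:
  fixes f :: "'a \<Rightarrow> real" and lo hi c :: real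
  assumes "finite I" and range: "\<And>i. i \<in> I \<Longrightarrow> lo \<le> f i \<and> f i \<le> hi"
    and mean: "card I * c = (\<Sum>i\<in>I. f i)"
  shows "(\<Sum>i\<in>I. (f i - c)\<^sup>2) \<le> card I * (hi - lo)\<^sup>2 / 4"
proof -
  have "(f i - c)\<^sup>2 \<le> (hi + lo - 2 * c) * f i + (c\<^sup>2 - hi * lo)" if "i \<in> I" for i
  proof -
    have "0 \<le> (f i - lo) * (hi - f i)" using range[OF that] by simp
    thus ?thesis by (simp add: algebra_simps power2_eq_square)
  qed
  hence "(\<Sum>i\<in>I. (f i - c)\<^sup>2) \<le> (\<Sum>i\<in>I. (hi + lo - 2 * c) * f i + (c\<^sup>2 - hi * lo))"
    by (rule sum_mono)
  also have "\<dots> = (hi + lo - 2 * c) * (\<Sum>i\<in>I. f i) + card I * (c\<^sup>2 - hi * lo)"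
    by (simp add: sum.distrib sum_distrib_left)
  also have "\<dots> = card I * ((hi + lo - 2 * c) * c + (c\<^sup>2 - hi * lo))"
    by (simp only: mean[symmetric]) (simp add: algebra_simps)
  also have "\<dots> = card I * (hi - lo)\<^sup>2 / 4 - card I * (c - (hi + lo) / 2)\<^sup>2"
    by (simp add: field_simps power2_eq_square)
  also have "\<dots> \<le> card I * (hi - lo)\<^sup>2 / 4" by simp
  finally show ?thesis .
qed

lemma add_sqrt_diff_square_strict_decreasing:
  fixes N u x T :: real
  assumes "N > 1" and "0 \<le> u" and "u < x" and "x\<^sup>2 \<le> T" and "T \<le> N * u\<^sup>2"
  shows "x + sqrt ((N - 1) * (T - x\<^sup>2)) < u + sqrt ((N - 1) * (T - u\<^sup>2))"
proof -
  define r a b where "r = sqrt (N - 1)" and "a = sqrt (T - u\<^sup>2)" and "b = sqrt (T - x\<^sup>2)"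
  have r: "r > 0" "r\<^sup>2 = N - 1" using assms(1) by (simp_all add: r_def)
  have "u\<^sup>2 < x\<^sup>2" using assms(2,3) by (simp add: power_strict_mono)
  hence a: "a\<^sup>2 = T - u\<^sup>2" and b: "b\<^sup>2 = T - x\<^sup>2" "0 \<le> b" and "b < a"
    using assms(4) by (simp_all add: a_def b_def)
  have "N * u\<^sup>2 = u\<^sup>2 + r\<^sup>2 * u\<^sup>2" by (simp add: r(2) algebra_simps)
  hence "a\<^sup>2 \<le> (r * u)\<^sup>2" using a assms(5) by (simp add: power_mult_distrib)
  moreover have "0 \<le> r * u" using r assms(2) by simp
  ultimately have "a \<le> r * u" by (rule power2_le_imp_le)
  moreover have "r * u < r * x" using r assms(3) by simp
  ultimately have "a + b < r * (x + u)" using \<open>b < a\<close> by (simp add: algebra_simps)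
  hence "(x - u) * (a + b) < (x - u) * (r * (x + u))"
    using assms(3) by (simp add: mult_strict_left_mono)
  also have "\<dots> = r * ((x - u) * (x + u))" by simp
  also have "(x - u) * (x + u) = (a - b) * (a + b)"
    using a b by (simp add: algebra_simps power2_eq_square)
  finally have "(x - u) * (a + b) < r * (a - b) * (a + b)" by simp
  hence "x - u < r * (a - b)" using \<open>b < a\<close> b(2) by (simp add: mult_less_cancel_right)
  moreover have "sqrt ((N - 1) * (T - x\<^sup>2)) = r * b" "sqrt ((N - 1) * (T - u\<^sup>2)) = r * a"
    by (simp_all add: r_def a_def b_def real_sqrt_mult)
  ultimately show ?thesis by (simp add: right_diff_distrib)
qed

lemma sum_abs_less_of_dominant_entry:
  fixes x :: "'a \<Rightarrow> real" and u T :: real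
  assumes "finite I" and "card I > 1" and "i0 \<in> I" and "0 \<le> u" and "u < x i0"
    and "(\<Sum>i\<in>I. (x i)\<^sup>2) \<le> T" and "T \<le> card I * u\<^sup>2"
  shows "(\<Sum>i\<in>I. \<bar>x i\<bar>) < u + sqrt ((real (card I) - 1) * (T - u\<^sup>2))"
proof -
  define J where "J = I - {i0}"
  have J: "finite J" "real (card J) = real (card I) - 1"
    using assms(1-3) by (auto simp: J_def)
  have split: "(\<Sum>i\<in>I. g i) = g i0 + (\<Sum>i\<in>J. g i)" for g :: "'a \<Rightarrow> real"
    unfolding J_def using assms(1,3) by (rule sum.remove)
  have "(\<Sum>i\<in>J. \<bar>x i\<bar>)\<^sup>2 \<le> (\<Sum>i\<in>J. \<bar>x i\<bar>\<^sup>2) * card J"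
    by (rule sum_squared_le_sum_of_squares)
  also have "(\<Sum>i\<in>J. \<bar>x i\<bar>\<^sup>2) \<le> T - (x i0)\<^sup>2"
    using assms(6) by (simp add: split)
  finally have "(\<Sum>i\<in>J. \<bar>x i\<bar>) \<le> sqrt ((real (card I) - 1) * (T - (x i0)\<^sup>2))"
    using J(2) assms(2) by (intro real_le_rsqrt) (simp add: mult.commute mult_left_mono)
  hence "(\<Sum>i\<in>I. \<bar>x i\<bar>) \<le> x i0 + sqrt ((real (card I) - 1) * (T - (x i0)\<^sup>2))"
    using assms(4,5) by (simp add: split)
  also have "\<dots> < u + sqrt ((real (card I) - 1) * (T - u\<^sup>2))"
  proof (rule add_sqrt_diff_square_strict_decreasing)
    show "(x i0)\<^sup>2 \<le> T"
      using assms(6) sum_nonneg[of J "\<lambda>i. (x i)\<^sup>2"] by (simp add: split)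
  qed (use assms in auto)
  finally show ?thesis .
qed

lemma sum_abs_less_of_zero_sum:
  fixes x :: "'a \<Rightarrow> real" and u T :: real
  assumes "finite I" and "(\<Sum>i\<in>I. x i) = 0" and "\<And>i. i \<in> I \<Longrightarrow> - u \<le> x i"
    and "i0 \<in> I" and "u < x i0" and "(\<Sum>i\<in>I. (x i)\<^sup>2) \<le> T"
  shows "(\<Sum>i\<in>I. \<bar>x i\<bar>) < sqrt (card I * T)"
proof -
  have "\<exists>j\<in>I. x j < 0"
  proof (rule ccontr)
    assume "\<not> (\<exists>j\<in>I. x j < 0)"
    hence "x i0 \<le> (\<Sum>i\<in>I. x i)"
      using assms(1,4) by (intro member_le_sum) (auto simp: not_less)
    thus False using assms(2,4,5) assms(3)[OF assms(4)] by linarith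
  qed
  then obtain j where j: "j \<in> I" "x j < 0" by blast
  have "\<bar>x j\<bar> \<noteq> \<bar>x i0\<bar>" using j assms(3)[OF j(1)] assms(5) by auto
  hence "(\<Sum>i\<in>I. \<bar>x i\<bar>)\<^sup>2 < (\<Sum>i\<in>I. \<bar>x i\<bar>\<^sup>2) * card I"
    using assms(1,4) j(1) by (intro sum_squared_less_sum_of_squares) auto
  also have "\<dots> \<le> card I * T"
    using mult_right_mono[OF assms(6), of "real (card I)"] by (simp add: mult.commute)
  finally show ?thesis by (rule real_less_rsqrt)
qed

lemma add_quarter_le_square_of_threshold:
  fixes N m D :: real
  assumes "0 < D" and "0 < N" and "N \<le> 4 * m * (sqrt (1 + D) - 1) / D"
  shows "2 * m / N + D / 4 \<le> (2 * m / N)\<^sup>2"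
proof -
  define u s where "u = 2 * m / N" and "s = sqrt (1 + D)"
  have s: "1 < s" "D = (s - 1) * (s + 1)"
    using assms(1) by (simp_all add: s_def algebra_simps)
  have "N * D \<le> 4 * m * (s - 1)"
    using assms unfolding s_def by (simp add: le_divide_eq)
  also have "4 * m = N * (2 * u)" using assms(2) by (simp add: u_def)
  finally have "N * D \<le> N * (2 * u * (s - 1))" by (simp add: algebra_simps)
  hence "D \<le> 2 * u * (s - 1)" using assms(2) by simp
  hence "(s - 1) * (s + 1) \<le> (s - 1) * (2 * u)" unfolding s(2) by (simp add: algebra_simps)
  hence "s + 1 \<le> 2 * u" using s(1) by simp
  hence "s\<^sup>2 \<le> (2 * u - 1)\<^sup>2" using s(1) by (intro power_mono) auto
  hence "1 + D \<le> 4 * u\<^sup>2 - 4 * u + 1"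
    using assms(1) by (simp add: s_def power2_eq_square algebra_simps)
  thus ?thesis by (simp add: u_def[symmetric])
qed

lemma sqrt_energy_split:
  fixes N m D :: real
  assumes "1 \<le> N" and "0 \<le> 2 * m / N + D / 4"
  shows "sqrt (N * (2 * m + N / 4 * D))
         = sqrt (2 * m / N + D / 4) + sqrt ((N - 1) * (2 * m + (N - 1) / 4 * D - 2 * m / N))"
proof -
  define v where "v = 2 * m / N + D / 4"
  have "N * (2 * m + N / 4 * D) = N\<^sup>2 * v"
    and "(N - 1) * (2 * m + (N - 1) / 4 * D - 2 * m / N) = (N - 1)\<^sup>2 * v"
    using assms(1) by (simp_all add: v_def power2_eq_square field_simps)
  hence "sqrt (N * (2 * m + N / 4 * D)) = N * sqrt v"
    and "sqrt ((N - 1) * (2 * m + (N - 1) / 4 * D - 2 * m / N)) = (N - 1) * sqrt v"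
    using assms(1) by (simp_all add: real_sqrt_mult)
  thus ?thesis unfolding v_def[symmetric] by (simp add: algebra_simps)
qed

section \<open>Quadratic forms and eigenvalues\<close>

definition quad_form :: "nat \<Rightarrow> (nat \<Rightarrow> nat \<Rightarrow> real) \<Rightarrow> (nat \<Rightarrow> real) \<Rightarrow> real" where
  "quad_form n a y = (\<Sum>i<n. \<Sum>j<n. a i j * y i * y j)"

definition sq_norm :: "nat \<Rightarrow> (nat \<Rightarrow> real) \<Rightarrow> real" where
  "sq_norm n y = (\<Sum>i<n. (y i)\<^sup>2)"

lemma sq_norm_nonneg: "0 \<le> sq_norm n y"
  by (simp add: sq_norm_def sum_nonneg)

lemma sq_norm_eq_0_iff: "sq_norm n y = 0 \<longleftrightarrow> (\<forall>i<n. y i = 0)"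
  by (auto simp: sq_norm_def sum_nonneg_eq_0_iff)

lemma eq_0_if_quadratic_nonpos:
  fixes c b :: real
  assumes "\<And>t. 2 * t * c + t\<^sup>2 * b \<le> 0"
  shows "c = 0"
proof (rule ccontr)
  assume "c \<noteq> 0"
  define k where "k = \<bar>b\<bar> + 1"
  have "k > 0" by (simp add: k_def)
  \<comment> \<open>at \<open>t = c / k\<close> the left-hand side equals \<open>c\<^sup>2 (2 k + b) / k\<^sup>2 > 0\<close>\<close>
  have "0 < c\<^sup>2 * (2 * k + b) / k\<^sup>2"
    using \<open>c \<noteq> 0\<close> \<open>k > 0\<close> by (intro divide_pos_pos mult_pos_pos) (auto simp: k_def abs_if)
  also have "\<dots> = 2 * (c / k) * c + (c / k)\<^sup>2 * b"
    using \<open>k > 0\<close> by (simp add: field_simps power2_eq_square)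
  also have "\<dots> \<le> 0" by (rule assms)
  finally show False by simp
qed

lemma quad_form_max_stationary:
  assumes sym: "\<And>i j. i < n \<Longrightarrow> j < n \<Longrightarrow> a i j = a j i"
    and max: "\<And>y. quad_form n a y \<le> l * sq_norm n y"
    and attained: "quad_form n a w = l * sq_norm n w" and "k < n"
  shows "(\<Sum>j<n. a k j * w j) = l * w k"
proof -
  define r where "r = (\<Sum>j<n. a k j * w j)"
  have "2 * t * (r - l * w k) + t\<^sup>2 * (a k k - l) \<le> 0" for t
  proof -
    define y where "y = (\<lambda>i. w i + (if i = k then t else 0))"
    have "a i j * y i * y j = a i j * w i * w j + (if i = k then t * (a k j * w j) else 0)
       + (if j = k then t * (a i k * w i) else 0) + (if i = k \<and> j = k then t\<^sup>2 * a k k else 0)"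
      for i j by (auto simp: y_def algebra_simps power2_eq_square)
    hence "quad_form n a y = quad_form n a w
       + (\<Sum>i<n. \<Sum>j<n. if i = k then t * (a k j * w j) else 0)
       + (\<Sum>i<n. \<Sum>j<n. if j = k then t * (a i k * w i) else 0)
       + (\<Sum>i<n. \<Sum>j<n. if i = k \<and> j = k then t\<^sup>2 * a k k else 0)"
      by (simp add: quad_form_def sum.distrib)
    also have "(\<Sum>i<n. \<Sum>j<n. if i = k then t * (a k j * w j) else 0) = t * r"
      using \<open>k < n\<close> by (subst sum.swap) (simp add: r_def sum_distrib_left)
    also have "(\<Sum>i<n. \<Sum>j<n. if j = k then t * (a i k * w i) else 0) = t * r"
      using \<open>k < n\<close> sym by (simp add: r_def sum_distrib_left mult.commute)
    also have "(\<Sum>i<n. \<Sum>j<n. if i = k \<and> j = k then t\<^sup>2 * a k k else 0)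
             = (\<Sum>i<n. if i = k then t\<^sup>2 * a k k else 0)"
      using \<open>k < n\<close> by (intro sum.cong) auto
    also have "\<dots> = t\<^sup>2 * a k k" using \<open>k < n\<close> by simp
    finally have "quad_form n a y = quad_form n a w + 2 * t * r + t\<^sup>2 * a k k" by simp
    moreover have "(y i)\<^sup>2 = (w i)\<^sup>2 + (if i = k then 2 * t * w k + t\<^sup>2 else 0)" for i
      by (auto simp: y_def power2_eq_square algebra_simps)
    hence "sq_norm n y = sq_norm n w + 2 * t * w k + t\<^sup>2"
      using \<open>k < n\<close> by (simp add: sq_norm_def sum.distrib)
    ultimately show ?thesis using max[of y] attained by (simp add: algebra_simps)
  qed
  thus ?thesis unfolding r_def[symmetric] by (metis eq_0_if_quadratic_nonpos eq_iff_diff_eq_0)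
qed

lemma quad_form_attains_max:
  assumes "0 < n"
  obtains w where "sq_norm n w = 1" and "\<And>y. quad_form n a y \<le> quad_form n a w * sq_norm n y"
proof -
  define S where "S = (\<lambda>i::nat. if i < n then {-1..1::real} else {0})"
  define sphere where "sphere = Pi\<^sub>E UNIV S \<inter> {y. sq_norm n y = 1}"
  have "compactin (product_topology (\<lambda>i. euclidean) UNIV) (Pi\<^sub>E UNIV S)"
    by (subst compactin_PiE) (auto simp: S_def)
  hence "compact (Pi\<^sub>E UNIV S)" by (simp add: euclidean_product_topology)
  moreover have "closed {y. sq_norm n y = 1}"
    unfolding sq_norm_def by (intro closed_Collect_eq continuous_intros) auto
  ultimately have "compact sphere" unfolding sphere_def by (rule compact_Int_closed)
  have in_sphere: "y \<in> sphere" if "sq_norm n y = 1" "\<And>i. n \<le> i \<Longrightarrow> y i = 0" for y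
  proof -
    have "(y i)\<^sup>2 \<le> 1" if "i < n" for i
      using member_le_sum[of i "{..<n}" "\<lambda>i. (y i)\<^sup>2"] \<open>i < n\<close> \<open>sq_norm n y = 1\<close>
      by (simp add: sq_norm_def)
    hence "\<bar>y i\<bar> \<le> 1" if "i < n" for i
      using that abs_le_square_iff[of "y i" 1] by simp
    thus ?thesis using that by (auto simp: sphere_def S_def PiE_iff abs_le_iff not_less)
  qed
  have "(\<Sum>i<n. (if i = 0 then 1 else 0::real)\<^sup>2) = (\<Sum>i<n. if i = 0 then 1 else 0)"
    by (rule sum.cong) auto
  hence "(\<lambda>i. if i = 0 then 1 else 0) \<in> sphere"
    using assms by (intro in_sphere) (simp_all add: sq_norm_def)
  moreover have "continuous_on UNIV (quad_form n a)"
    unfolding quad_form_def by (intro continuous_intros) auto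
  hence "continuous_on sphere (quad_form n a)" by (rule continuous_on_subset) simp
  ultimately obtain w where w: "w \<in> sphere" and w_max: "\<And>z. z \<in> sphere \<Longrightarrow> quad_form n a z \<le> quad_form n a w"
    using continuous_attains_sup[OF \<open>compact sphere\<close>] by blast
  have "sq_norm n w = 1" using w by (simp add: sphere_def)
  moreover have "quad_form n a y \<le> quad_form n a w * sq_norm n y" for y
  proof (cases "sq_norm n y = 0")
    case True
    hence "quad_form n a y = 0" by (simp add: sq_norm_eq_0_iff quad_form_def)
    thus ?thesis using True by simp
  next
    case False
    define s where "s = sq_norm n y"
    have "s > 0" using False sq_norm_nonneg[of n y] by (simp add: s_def)
    define z where "z = (\<lambda>i. if i < n then y i / sqrt s else 0)"
    have "sq_norm n z = (\<Sum>i<n. (y i)\<^sup>2 / s)"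
      unfolding sq_norm_def z_def using \<open>s > 0\<close> by (simp add: power_divide)
    also have "\<dots> = 1" using \<open>s > 0\<close> by (simp add: s_def sq_norm_def flip: sum_divide_distrib)
    finally have "z \<in> sphere" by (intro in_sphere) (simp_all add: z_def)
    moreover have "quad_form n a z = quad_form n a y / s"
      unfolding quad_form_def z_def using \<open>s > 0\<close> by (simp add: sum_divide_distrib field_simps)
    ultimately show ?thesis
      using w_max[of z] \<open>s > 0\<close> by (simp add: s_def divide_le_eq)
  qed
  ultimately show ?thesis by (rule that)
qed

lemma poly_linear_factors_eq_0_iff:
  fixes x :: "'a :: idom"
  shows "poly (\<Prod>q\<leftarrow>es. [:- q, 1:]) x = 0 \<longleftrightarrow> x \<in> set es"
  by (induction es) auto

lemma mult_mat_vec_eq_smult_iff: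
  "mat n n (\<lambda>(i, j). a i j) *\<^sub>v vec n w = l \<cdot>\<^sub>v vec n w
     \<longleftrightarrow> (\<forall>k<n. (\<Sum>j<n. a k j * w j) = l * w k)"
proof -
  have "(mat n n (\<lambda>(i, j). a i j) *\<^sub>v vec n w) $ k = (\<Sum>j<n. a k j * w j)" if "k < n" for k
    using that by (simp add: scalar_prod_def lessThan_atLeast0)
  thus ?thesis by (auto simp: vec_eq_iff)
qed

lemma mem_eigenvalue_list_iff:
  assumes "char_poly (mat n n (\<lambda>(i, j). a i j)) = (\<Prod>q\<leftarrow>es. [:- q, 1:])"
  shows "l \<in> set es \<longleftrightarrow> (\<exists>w. sq_norm n w \<noteq> 0 \<and> (\<forall>k<n. (\<Sum>j<n. a k j * w j) = l * w k))"
proof -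
  let ?A = "mat n n (\<lambda>(i, j). a i j)"
  have "l \<in> set es \<longleftrightarrow> eigenvalue ?A l"
    by (simp add: eigenvalue_root_char_poly[of _ n] assms poly_linear_factors_eq_0_iff)
  also have "\<dots> \<longleftrightarrow> (\<exists>w. vec n w \<noteq> 0\<^sub>v n \<and> ?A *\<^sub>v vec n w = l \<cdot>\<^sub>v vec n w)"
  proof -
    have "vec n (\<lambda>i. v $ i) = v" if "v \<in> carrier_vec n" for v :: "real vec"
      using that by (intro eq_vecI) auto
    thus ?thesis unfolding eigenvalue_def eigenvector_def by (metis dim_row_mat(1) vec_carrier)
  qed
  also have "\<dots> \<longleftrightarrow> (\<exists>w. sq_norm n w \<noteq> 0 \<and> (\<forall>k<n. (\<Sum>j<n. a k j * w j) = l * w k))"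
    unfolding mult_mat_vec_eq_smult_iff by (simp add: sq_norm_eq_0_iff vec_eq_iff)
  finally show ?thesis .
qed

lemma quad_form_eigenvector:
  assumes "\<And>k. k < n \<Longrightarrow> (\<Sum>j<n. a k j * w j) = l * w k"
  shows "quad_form n a w = l * sq_norm n w"
proof -
  have "quad_form n a w = (\<Sum>i<n. w i * (\<Sum>j<n. a i j * w j))"
    by (simp add: quad_form_def sum_distrib_left algebra_simps)
  also have "\<dots> = (\<Sum>i<n. w i * (l * w i))" by (intro sum.cong) (simp_all add: assms)
  also have "\<dots> = l * sq_norm n w"
    by (simp add: sq_norm_def sum_distrib_left power2_eq_square algebra_simps)
  finally show ?thesis .
qed

lemma eigenvalue_nonneg_if_quad_form_nonneg:
  assumes "char_poly (mat n n (\<lambda>(i, j). a i j)) = (\<Prod>q\<leftarrow>es. [:- q, 1:])"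
    and "\<And>y. 0 \<le> quad_form n a y" and "q \<in> set es"
  shows "0 \<le> q"
proof -
  obtain w where "sq_norm n w \<noteq> 0" and "\<forall>k<n. (\<Sum>j<n. a k j * w j) = q * w k"
    using assms(3) mem_eigenvalue_list_iff[OF assms(1)] by blast
  hence "0 \<le> q * sq_norm n w" and "0 < sq_norm n w"
    using assms(2)[of w] quad_form_eigenvector[of n a w q] sq_norm_nonneg[of n w] by auto
  thus ?thesis by (simp add: zero_le_mult_iff)
qed

lemma exists_max_eigenvalue:
  assumes "char_poly (mat n n (\<lambda>(i, j). a i j)) = (\<Prod>q\<leftarrow>es. [:- q, 1:])"
    and sym: "\<And>i j. i < n \<Longrightarrow> j < n \<Longrightarrow> a i j = a j i" and "0 < n"
  obtains l where "l \<in> set es" and "\<And>y. quad_form n a y \<le> l * sq_norm n y"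
proof -
  obtain w where normed: "sq_norm n w = 1" and max: "\<And>y. quad_form n a y \<le> quad_form n a w * sq_norm n y"
    using quad_form_attains_max[OF \<open>0 < n\<close>] by blast
  have attained: "quad_form n a w = quad_form n a w * sq_norm n w" by (simp add: normed)
  have "(\<Sum>j<n. a k j * w j) = quad_form n a w * w k" if "k < n" for k
    by (rule quad_form_max_stationary[OF sym max attained that])
  hence "quad_form n a w \<in> set es"
    using normed by (auto simp: mem_eigenvalue_list_iff[OF assms(1)] intro!: exI[of _ w])
  thus ?thesis using max that by blast
qed

section \<open>Traces\<close>

definition mat_trace :: "'a :: semiring_0 mat \<Rightarrow> 'a" where
  "mat_trace A = (\<Sum>i<dim_row A. A $$ (i, i))"

lemma mat_trace_mult:
  fixes A B :: "'a :: semiring_0 mat"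
  assumes "A \<in> carrier_mat n m" and "B \<in> carrier_mat m n"
  shows "mat_trace (A * B) = (\<Sum>i<n. \<Sum>k<m. A $$ (i, k) * B $$ (k, i))"
  using assms by (auto simp: mat_trace_def scalar_prod_def lessThan_atLeast0 intro!: sum.cong)

lemma mat_trace_mult_comm:
  fixes A B :: "'a :: comm_semiring_0 mat"
  assumes "A \<in> carrier_mat n m" and "B \<in> carrier_mat m n"
  shows "mat_trace (A * B) = mat_trace (B * A)"
  unfolding mat_trace_mult[OF assms] mat_trace_mult[OF assms(2,1)]
  by (subst sum.swap) (simp add: mult.commute)

lemma mat_trace_similar:
  fixes A B :: "'a :: comm_ring_1 mat"
  assumes "similar_mat_wit A B P Q"
  shows "mat_trace A = mat_trace B"
proof -
  define n where "n = dim_row A"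
  note wit = similar_mat_witD[OF n_def assms]
  have "mat_trace A = mat_trace (P * B * Q)" by (simp only: wit(3))
  also have "\<dots> = mat_trace (Q * (P * B))"
    using wit(5-7) by (intro mat_trace_mult_comm[of _ n n]) auto
  also have "Q * (P * B) = Q * P * B"
    using wit(5-7) by (intro assoc_mult_mat[symmetric]) auto
  also have "\<dots> = B" using wit(2,5) by simp
  finally show ?thesis .
qed

lemma upper_triangular_mult:
  fixes A B :: "'a :: comm_semiring_0 mat"
  assumes A: "A \<in> carrier_mat n n" "upper_triangular A" and B: "B \<in> carrier_mat n n" "upper_triangular B"
  shows "upper_triangular (A * B)" and "i < n \<Longrightarrow> (A * B) $$ (i, i) = A $$ (i, i) * B $$ (i, i)"
proof -
  have entry: "(A * B) $$ (i, j) = (\<Sum>k\<in>{i..j}. A $$ (i, k) * B $$ (k, j))"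
    if "i < n" "j < n" for i j
  proof -
    have "(A * B) $$ (i, j) = (\<Sum>k<n. A $$ (i, k) * B $$ (k, j))"
      using that A B by (simp add: scalar_prod_def lessThan_atLeast0)
    also have "\<dots> = (\<Sum>k\<in>{i..j}. A $$ (i, k) * B $$ (k, j))"
    proof (rule sum.mono_neutral_right)
      show "\<forall>k\<in>{..<n} - {i..j}. A $$ (i, k) * B $$ (k, j) = 0"
      proof
        fix k assume "k \<in> {..<n} - {i..j}"
        hence "k < i \<or> j < k" "k < n" by auto
        thus "A $$ (i, k) * B $$ (k, j) = 0"
          using upper_triangularD[OF A(2), of k i] upper_triangularD[OF B(2), of j k] that A B by auto
      qed
    qed (use that in auto)
    finally show ?thesis .
  qed
  show "upper_triangular (A * B)"
  proof (rule upper_triangularI)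
    fix i j assume "j < i" "i < dim_row (A * B)"
    hence "i < n" "j < n" using A by auto
    hence "(A * B) $$ (i, j) = (\<Sum>k\<in>{i..j}. A $$ (i, k) * B $$ (k, j))" by (rule entry)
    thus "(A * B) $$ (i, j) = 0" using \<open>j < i\<close> by simp
  qed
  show "i < n \<Longrightarrow> (A * B) $$ (i, i) = A $$ (i, i) * B $$ (i, i)"
    by (simp add: entry)
qed

lemma upper_triangular_pow:
  fixes A :: "'a :: comm_semiring_1 mat"
  assumes A: "A \<in> carrier_mat n n" "upper_triangular A"
  shows "upper_triangular (A ^\<^sub>m k) \<and> (\<forall>i<n. (A ^\<^sub>m k) $$ (i, i) = (A $$ (i, i)) ^ k)"
proof (induction k)
  case 0
  thus ?case using A by simp
next
  case (Suc k)
  have "A ^\<^sub>m k \<in> carrier_mat n n" using A by simp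
  thus ?case using Suc A upper_triangular_mult[of "A ^\<^sub>m k" n A] by (simp add: mult.commute)
qed

lemma mat_trace_pow_char_poly:
  fixes A :: "'a :: conjugatable_ordered_field mat"
  assumes A: "A \<in> carrier_mat n n" and cp: "char_poly A = (\<Prod>q\<leftarrow>es. [:- q, 1:])"
  shows "length es = n" and "mat_trace (A ^\<^sub>m k) = (\<Sum>q\<leftarrow>es. q ^ k)"
proof -
  obtain T P Q where "schur_decomposition A es = (T, P, Q)"
    by (cases "schur_decomposition A es") auto
  with schur_decomposition[OF A cp]
  have sim: "similar_mat_wit A T P Q" and ut: "upper_triangular T" and diag: "diag_mat T = es"
    by auto
  have T: "T \<in> carrier_mat n n" using similar_mat_witD2[OF A sim] by simp
  show "length es = n" using diag T by (auto simp: diag_mat_def)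
  have "mat_trace (A ^\<^sub>m k) = mat_trace (T ^\<^sub>m k)"
    by (rule mat_trace_similar[OF similar_mat_wit_pow[OF sim]])
  also have "\<dots> = (\<Sum>i<n. (T $$ (i, i)) ^ k)"
    using T upper_triangular_pow[OF T ut, of k] by (simp add: mat_trace_def)
  also have "\<dots> = (\<Sum>q\<leftarrow>es. q ^ k)"
    using T by (simp add: diag[symmetric] diag_mat_def sum_list_sum_nth atLeast0LessThan)
  finally show "mat_trace (A ^\<^sub>m k) = (\<Sum>q\<leftarrow>es. q ^ k)" .
qed

section \<open>The signless Laplacian\<close>

definition signless_entry :: "nat \<Rightarrow> (nat \<Rightarrow> nat \<Rightarrow> bool) \<Rightarrow> nat \<Rightarrow> nat \<Rightarrow> real" where
  "signless_entry n E i j = (if i = j then real (degree n E i) else if E i j then 1 else 0)"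

lemma signless_laplacian_eq_mat:
  "signless_laplacian n E = mat n n (\<lambda>(i, j). signless_entry n E i j)"
  by (simp add: signless_laplacian_def signless_entry_def)

lemma signless_entry_sym:
  assumes "symp E"
  shows "signless_entry n E i j = signless_entry n E j i"
  using assms by (auto simp: signless_entry_def dest: sympD)

lemma sum_adjacency_row: "(\<Sum>j<n. if E i j then 1 else 0 :: real) = real (degree n E i)"
proof -
  have "{j \<in> {..<n}. E i j} = {j. j < n \<and> E i j}" by auto
  thus ?thesis by (simp add: sum.If_cases Int_def degree_def)
qed

lemma sum_degree_eq_twice_num_edges:
  assumes sym: "symp E" and irrefl: "\<And>i. \<not> E i i"
  shows "(\<Sum>i<n. degree n E i) = 2 * num_edges n E"
proof -
  define L R where "L = {(i, j). i < j \<and> j < n \<and> E i j}" and "R = {(i, j). j < i \<and> i < n \<and> E i j}"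
  have "(\<Sum>i<n. degree n E i) = card (SIGMA i:{..<n}. {j. j < n \<and> E i j})"
    unfolding degree_def by (rule card_SigmaI[symmetric]) auto
  also have "(SIGMA i:{..<n}. {j. j < n \<and> E i j}) = L \<union> R"
    using irrefl by (auto simp: L_def R_def) (metis linorder_neqE_nat)
  also have "card (L \<union> R) = card L + card R"
    by (rule card_Un_disjoint) (auto simp: L_def R_def intro: finite_subset[of _ "{..<n} \<times> {..<n}"])
  also have "R = prod.swap ` L" using sympD[OF sym] by (auto simp: L_def R_def image_iff)
  also have "card (prod.swap ` L) = card L" by (rule card_image) simp
  finally show ?thesis by (simp add: num_edges_def L_def)
qed

lemma sum_real_degree_eq_twice_num_edges:
  assumes "symp E" and "\<And>i. \<not> E i i"
  shows "(\<Sum>i<n. real (degree n E i)) = 2 * real (num_edges n E)"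
  using sum_degree_eq_twice_num_edges[where n=n, OF assms] by (simp flip: of_nat_sum)

lemma sum_signless_entry_row:
  assumes irrefl: "\<And>i. \<not> E i i" and "i < n"
  shows "(\<Sum>j<n. signless_entry n E i j) = 2 * real (degree n E i)"
proof -
  have "(\<Sum>j<n. signless_entry n E i j)
      = (\<Sum>j<n. (if j = i then real (degree n E i) else 0) + (if E i j then 1 else 0))"
    using irrefl by (intro sum.cong) (auto simp: signless_entry_def)
  thus ?thesis using \<open>i < n\<close> by (simp add: sum.distrib sum_adjacency_row)
qed

lemma quad_form_signless_nonneg:
  assumes sym: "symp E" and irrefl: "\<And>i. \<not> E i i"
  shows "0 \<le> quad_form n (signless_entry n E) y"
proof -
  \<comment> \<open>twice the form is the sum of \<open>(y\<^sub>i + y\<^sub>j)\<^sup>2\<close> over ordered pairs of adjacent vertices\<close>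
  define e where "e = (\<lambda>i j. if E i j then 1 else 0 :: real)"
  define S where "S = (\<lambda>f. \<Sum>i<n. \<Sum>j<n. e i j * f i j :: real)"
  have "quad_form n (signless_entry n E) y
      = (\<Sum>i<n. \<Sum>j<n. (if j = i then real (degree n E i) * (y i)\<^sup>2 else 0) + e i j * y i * y j)"
    unfolding quad_form_def using irrefl
    by (intro sum.cong) (auto simp: signless_entry_def e_def power2_eq_square)
  also have "\<dots> = S (\<lambda>i j. (y i)\<^sup>2) + S (\<lambda>i j. y i * y j)"
    by (simp add: S_def e_def sum.distrib sum_distrib_right mult.assoc
        flip: sum_adjacency_row[where n=n and E=E])
  finally have "quad_form n (signless_entry n E) y = S (\<lambda>i j. (y i)\<^sup>2) + S (\<lambda>i j. y i * y j)" .
  moreover have "S (\<lambda>i j. (y j)\<^sup>2) = S (\<lambda>i j. (y i)\<^sup>2)"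
    unfolding S_def by (subst sum.swap) (use sympD[OF sym] in \<open>auto simp: e_def intro!: sum.cong\<close>)
  moreover have "S (\<lambda>i j. (y i + y j)\<^sup>2)
      = S (\<lambda>i j. (y i)\<^sup>2) + S (\<lambda>i j. (y j)\<^sup>2) + 2 * S (\<lambda>i j. y i * y j)"
    by (simp add: S_def power2_sum algebra_simps sum.distrib sum_distrib_left)
  moreover have "0 \<le> S (\<lambda>i j. (y i + y j)\<^sup>2)" unfolding S_def e_def by (intro sum_nonneg) auto
  ultimately show ?thesis by simp
qed

lemma two_le_card_if_not_regular:
  assumes "\<not> regular_graph n E"
  shows "2 \<le> n"
proof -
  obtain i j where "i < n" "j < n" "degree n E i \<noteq> degree n E j"
    using assms by (auto simp: regular_graph_def)
  hence "i \<noteq> j" "i < n" "j < n" by auto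
  thus ?thesis by linarith
qed

lemma min_degree_less_max_degree_if_not_regular:
  assumes "\<not> regular_graph n E"
  shows "min_degree n E < max_degree n E"
proof -
  obtain i j where ij: "i < n" "j < n" and "degree n E i \<noteq> degree n E j"
    using assms by (auto simp: regular_graph_def)
  have "min_degree n E \<le> degree n E k" "degree n E k \<le> max_degree n E" if "k < n" for k
    using that by (auto simp: min_degree_def max_degree_def intro: Min_le Max_ge)
  from this[OF ij(1)] this[OF ij(2)] \<open>degree n E i \<noteq> degree n E j\<close> show ?thesis by linarith
qed

lemma signless_eigenvalues:
  assumes "is_eigenvalue_list (signless_laplacian n E) es"
  shows "char_poly (mat n n (\<lambda>(i, j). signless_entry n E i j)) = (\<Prod>q\<leftarrow>es. [:- q, 1:])"
    and "length es = n"
proof -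
  show cp: "char_poly (mat n n (\<lambda>(i, j). signless_entry n E i j)) = (\<Prod>q\<leftarrow>es. [:- q, 1:])"
    using assms by (simp add: is_eigenvalue_list_def signless_laplacian_eq_mat)
  show "length es = n" by (rule mat_trace_pow_char_poly(1)[OF _ cp]) simp
qed

lemma signless_eigenvalue_nonneg:
  assumes "symp E" and "\<And>i. \<not> E i i"
    and "is_eigenvalue_list (signless_laplacian n E) es" and "q \<in> set es"
  shows "0 \<le> q"
  using signless_eigenvalues(1)[OF assms(3)] quad_form_signless_nonneg[OF assms(1,2)] assms(4)
  by (rule eigenvalue_nonneg_if_quad_form_nonneg)

lemma signless_eigenvalue_sums:
  assumes sym: "symp E" and irrefl: "\<And>i. \<not> E i i"
    and eig: "is_eigenvalue_list (signless_laplacian n E) es"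
  shows "sum_list es = 2 * real (num_edges n E)"
    and "(\<Sum>q\<leftarrow>es. q\<^sup>2) = (\<Sum>i<n. (real (degree n E i))\<^sup>2) + 2 * real (num_edges n E)"
proof -
  define Q where "Q = mat n n (\<lambda>(i, j). signless_entry n E i j)"
  have Q: "Q \<in> carrier_mat n n" by (simp add: Q_def)
  note cp = signless_eigenvalues(1)[OF eig, folded Q_def]
  note degs = sum_real_degree_eq_twice_num_edges[where n=n, OF sym irrefl]
  have "sum_list es = mat_trace (Q ^\<^sub>m 1)"
    using mat_trace_pow_char_poly(2)[OF Q cp, of 1] by simp
  also have "\<dots> = (\<Sum>i<n. real (degree n E i))"
    using Q by (simp add: mat_trace_def Q_def signless_entry_def)
  finally show "sum_list es = 2 * real (num_edges n E)" using degs by simp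
  have "(\<Sum>q\<leftarrow>es. q\<^sup>2) = mat_trace (Q * Q)"
    using mat_trace_pow_char_poly(2)[OF Q cp, of 2] Q by (simp add: numeral_2_eq_2)
  also have "\<dots> = (\<Sum>i<n. \<Sum>j<n. (signless_entry n E i j)\<^sup>2)"
    unfolding mat_trace_mult[OF Q Q]
    by (intro sum.cong refl) (simp add: Q_def signless_entry_sym[OF sym] power2_eq_square)
  also have "\<dots> = (\<Sum>i<n. \<Sum>j<n. (if j = i then (real (degree n E i))\<^sup>2 else 0)
                                  + (if E i j then 1 else 0))"
    using irrefl by (intro sum.cong refl) (auto simp: signless_entry_def)
  also have "\<dots> = (\<Sum>i<n. (real (degree n E i))\<^sup>2) + 2 * real (num_edges n E)"
    by (simp add: sum.distrib sum_adjacency_row degs)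
  finally show "(\<Sum>q\<leftarrow>es. q\<^sup>2) = (\<Sum>i<n. (real (degree n E i))\<^sup>2) + 2 * real (num_edges n E)" .
qed

lemma signless_eigenvalue_deviation_le:
  assumes sym: "symp E" and irrefl: "\<And>i. \<not> E i i"
    and eig: "is_eigenvalue_list (signless_laplacian n E) es" and "0 < n"
  defines "u \<equiv> 2 * real (num_edges n E) / real n"
  shows "(\<Sum>q\<leftarrow>es. (q - u)\<^sup>2)
           \<le> 2 * real (num_edges n E) + real n / 4 * (real (max_degree n E) - real (min_degree n E))\<^sup>2"
proof -
  define d where "d i = real (degree n E i)" for i
  have degs: "(\<Sum>i<n. d i) = 2 * real (num_edges n E)"
    unfolding d_def by (rule sum_real_degree_eq_twice_num_edges[OF sym irrefl])
  have mean: "real n * u = (\<Sum>i<n. d i)" using \<open>0 < n\<close> by (simp add: u_def degs)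
  note sums = signless_eigenvalue_sums[OF sym irrefl eig, folded d_def]
  have "(\<Sum>q\<leftarrow>es. (q - u)\<^sup>2) = (\<Sum>q\<leftarrow>es. q\<^sup>2) - 2 * u * (\<Sum>q\<leftarrow>es. q) + real n * u\<^sup>2"
    by (simp add: power2_diff sum_list_subtractf sum_list_addf sum_list_const_mult
        sum_list_mult_const sum_list_triv signless_eigenvalues(2)[OF eig] mult.assoc)
  also have "\<dots> = (\<Sum>i<n. (d i - u)\<^sup>2) + 2 * real (num_edges n E)"
  proof -
    have "(\<Sum>i<n. 2 * d i * u) = 2 * u * (\<Sum>i<n. d i)"
      by (simp add: sum_distrib_left algebra_simps)
    thus ?thesis
      using sums degs by (simp add: power2_diff sum.distrib sum_subtractf mean)
  qed
  also have "(\<Sum>i<n. (d i - u)\<^sup>2) \<le> real n / 4 * (real (max_degree n E) - real (min_degree n E))\<^sup>2"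
  proof -
    have "real (min_degree n E) \<le> d i \<and> d i \<le> real (max_degree n E)" if "i < n" for i
      using that by (auto simp: d_def min_degree_def max_degree_def intro: Min_le Max_ge)
    thus ?thesis
      using sum_square_deviation_le_range[where I="{..<n}" and f=d and c=u
          and lo="real (min_degree n E)" and hi="real (max_degree n E)"] mean by simp
  qed
  finally show ?thesis by simp
qed

lemma signless_max_eigenvalue_gt:
  assumes sym: "symp E" and irrefl: "\<And>i. \<not> E i i"
    and eig: "is_eigenvalue_list (signless_laplacian n E) es" and nonreg: "\<not> regular_graph n E"
  shows "\<exists>q\<in>set es. 4 * real (num_edges n E) < q * real n"
proof -
  define a where "a = signless_entry n E"
  define one where "one = (\<lambda>i::nat. 1 :: real)"
  have "0 < n" using two_le_card_if_not_regular[OF nonreg] by simp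
  obtain l where l: "l \<in> set es" and max: "\<And>y. quad_form n a y \<le> l * sq_norm n y"
    using exists_max_eigenvalue[OF signless_eigenvalues(1)[OF eig]
        signless_entry_sym[OF sym] \<open>0 < n\<close>] unfolding a_def by blast
  have rows: "(\<Sum>j<n. a k j * one j) = 2 * real (degree n E k)" if "k < n" for k
    using sum_signless_entry_row[where E=E, OF irrefl that] by (simp add: a_def one_def)
  have "quad_form n a one = (\<Sum>i<n. 2 * real (degree n E i))"
    unfolding quad_form_def by (intro sum.cong) (simp_all add: one_def flip: rows)
  also have "\<dots> = 4 * real (num_edges n E)"
    by (simp add: sum_real_degree_eq_twice_num_edges[OF sym irrefl] flip: sum_distrib_left)
  finally have qf_one: "quad_form n a one = 4 * real (num_edges n E)" .
  have norm_one: "sq_norm n one = real n" by (simp add: sq_norm_def one_def)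
  have le: "4 * real (num_edges n E) \<le> l * real n" using max[of one] qf_one norm_one by simp
  have "4 * real (num_edges n E) \<noteq> l * real n"
  proof
    assume "4 * real (num_edges n E) = l * real n"
    hence "quad_form n a one = l * sq_norm n one"
      using qf_one norm_one by simp
    \<comment> \<open>so the all-ones vector is an eigenvector for \<open>l\<close> and all degrees equal \<open>l / 2\<close>\<close>
    hence twice_degree: "2 * real (degree n E k) = l * one k" if "k < n" for k
      using quad_form_max_stationary[OF _ max _ that] signless_entry_sym[OF sym]
        rows[OF that] unfolding a_def by metis
    have "real (degree n E k) = l / 2" if "k < n" for k
      using twice_degree[OF that] by (simp add: one_def)
    hence "regular_graph n E" unfolding regular_graph_def by (metis of_nat_eq_iff)
    with nonreg show False ..
  qed
  with le l show ?thesis by force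
qed

lemma signless_spectrum_centred:
  assumes sym: "symp E" and irrefl: "\<And>i. \<not> E i i"
    and eig: "is_eigenvalue_list (signless_laplacian n E) es" and nonreg: "\<not> regular_graph n E"
  defines "u \<equiv> 2 * real (num_edges n E) / real n"
  shows "QE n E es = (\<Sum>i<n. \<bar>es ! i - u\<bar>)"
    and "(\<Sum>i<n. es ! i - u) = 0"
    and "(\<Sum>i<n. (es ! i - u)\<^sup>2)
           \<le> 2 * real (num_edges n E) + real n / 4 * (real (max_degree n E) - real (min_degree n E))\<^sup>2"
    and "i < n \<Longrightarrow> 0 \<le> es ! i"
    and "\<exists>i0<n. u < es ! i0 - u"
proof -
  have "0 < n" using two_le_card_if_not_regular[OF nonreg] by simp
  have len: "length es = n" by (rule signless_eigenvalues(2)[OF eig])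
  have list_sum: "(\<Sum>q\<leftarrow>es. f q) = (\<Sum>i<n. f (es ! i))" for f :: "real \<Rightarrow> real"
    by (simp add: sum_list_sum_nth len atLeast0LessThan)
  show "QE n E es = (\<Sum>i<n. \<bar>es ! i - u\<bar>)"
    unfolding QE_def u_def by (rule list_sum)
  have "(\<Sum>i<n. es ! i) = real n * u"
    using list_sum[of "\<lambda>q. q"] signless_eigenvalue_sums(1)[OF sym irrefl eig] \<open>0 < n\<close>
    by (simp add: u_def)
  thus "(\<Sum>i<n. es ! i - u) = 0" by (simp add: sum_subtractf)
  show "(\<Sum>i<n. (es ! i - u)\<^sup>2)
           \<le> 2 * real (num_edges n E) + real n / 4 * (real (max_degree n E) - real (min_degree n E))\<^sup>2"
    using signless_eigenvalue_deviation_le[OF sym irrefl eig \<open>0 < n\<close>, folded u_def]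
    unfolding list_sum .
  show "i < n \<Longrightarrow> 0 \<le> es ! i"
    using signless_eigenvalue_nonneg[OF sym irrefl eig, of "es ! i"] by (simp add: len)
  obtain q where "q \<in> set es" and "4 * real (num_edges n E) < q * real n"
    using signless_max_eigenvalue_gt[OF sym irrefl eig nonreg] by blast
  moreover have "2 * u = 4 * real (num_edges n E) / real n" by (simp add: u_def)
  ultimately have "q \<in> set es" and "u < q - u" using \<open>0 < n\<close> by (simp_all add: pos_divide_less_eq)
  thus "\<exists>i0<n. u < es ! i0 - u" by (auto simp: in_set_conv_nth len)
qed

theorem mainTheorem14:
  fixes n :: nat and E :: "nat \<Rightarrow> nat \<Rightarrow> bool" and es :: "real list"
  assumes sym: "\<And>i j. E i j \<Longrightarrow> E j i"
    and irrefl: "\<And>i. \<not> E i i"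
    and conn: "graph_connected n E"
    and nonreg: "\<not> regular_graph n E"
    and eig: "is_eigenvalue_list (signless_laplacian n E) es"
  defines "m \<equiv> real (num_edges n E)"
    and "D \<equiv> (real (max_degree n E) - real (min_degree n E))\<^sup>2"
  shows "(real n \<le> 4 * m * (sqrt (1 + D) - 1) / D \<longrightarrow>
           QE n E es < 2 * m / real n
             + sqrt ((real n - 1) * (2 * m + real n / 4 * D - (2 * m / real n)\<^sup>2)))
       \<and> (real n > 4 * m * (sqrt (1 + D) - 1) / D \<longrightarrow>
           QE n E es < sqrt (2 * m / real n + D / 4)
             + sqrt ((real n - 1) * (2 * m + (real n - 1) / 4 * D - 2 * m / real n)))"
proof -
  define u T where "u = 2 * m / real n" and "T = 2 * m + real n / 4 * D"
  define x where "x i = es ! i - u" for i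
  have "symp E" using sym by (rule sympI)
  have "2 \<le> n" by (rule two_le_card_if_not_regular[OF nonreg])
  have "0 < D" using min_degree_less_max_degree_if_not_regular[OF nonreg] by (simp add: D_def)
  have "0 \<le> u" by (simp add: u_def m_def)
  note centred = signless_spectrum_centred[OF \<open>symp E\<close> irrefl eig nonreg,
      folded m_def, folded u_def D_def, folded T_def x_def]
  obtain i0 where i0: "i0 \<in> {..<n}" and dominant: "u < x i0" using centred(5) by blast
  show ?thesis
  proof (intro conjI impI)
    assume "real n \<le> 4 * m * (sqrt (1 + D) - 1) / D"
    hence "u + D / 4 \<le> u\<^sup>2"
      using add_quarter_le_square_of_threshold[OF \<open>0 < D\<close>] \<open>2 \<le> n\<close> by (simp add: u_def)
    hence "T \<le> real (card {..<n}) * u\<^sup>2"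
      using mult_left_mono[of "u + D / 4" "u\<^sup>2" "real n"] \<open>2 \<le> n\<close>
      by (simp add: T_def u_def distrib_left)
    from sum_abs_less_of_dominant_entry[OF finite_lessThan _ i0 \<open>0 \<le> u\<close> dominant centred(3) this]
    show "QE n E es < 2 * m / real n
             + sqrt ((real n - 1) * (2 * m + real n / 4 * D - (2 * m / real n)\<^sup>2))"
      using \<open>2 \<le> n\<close> by (simp add: centred(1) u_def T_def)
  next
    have "(\<Sum>i<n. \<bar>x i\<bar>) < sqrt (real (card {..<n}) * T)"
      by (rule sum_abs_less_of_zero_sum[OF finite_lessThan centred(2) _ i0 dominant centred(3)])
        (use centred(4) in \<open>simp add: x_def\<close>)
    hence "QE n E es < sqrt (real (card {..<n}) * T)" by (simp only: centred(1))
    also have "\<dots> = sqrt (2 * m / real n + D / 4)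
             + sqrt ((real n - 1) * (2 * m + (real n - 1) / 4 * D - 2 * m / real n))"
      unfolding card_lessThan T_def using \<open>2 \<le> n\<close> \<open>0 \<le> u\<close> \<open>0 < D\<close>
      by (intro sqrt_energy_split) (simp_all add: u_def)
    finally show "QE n E es < sqrt (2 * m / real n + D / 4)
             + sqrt ((real n - 1) * (2 * m + (real n - 1) / 4 * D - 2 * m / real n))" .
  qed
qed

end
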